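(* Let $\mathcal H$ be a complex Hilbert space, $T\in\mathcal B(\mathcal H)$ left-invertible, and $L\in\mathcal B(\mathcal H)$ with $LT=I$. Then the spectral radius $r(L)$ is positive, and: if $0\in\sigma(T)$ then $\mathbb D_{1/r(L)}\subseteq\sigma_r(T)\setminus\sigma_l(T)$; if $0\notin\sigma(T)$ then $\sigma(T)\subseteq\mathbb C\setminus\mathbb D_{1/r(L)}$. In particular $r(T)r(L)\ge1$.
   Context: $\mathbb D_\rho=\{z\in\mathbb C:|z|<\rho\}$. $\sigma_l(A)$ (resp. $\sigma_r(A)$) is the set of $\lambda$ with $A-\lambda I$ not left-invertible (resp. not right-invertible); $r(\cdot)$ is the spectral radius. *)

theory Defs
  imports "HOL-Analysis.Analysis"
begin

class complex_vector = real_vector +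
  fixes scaleC :: "complex \<Rightarrow> 'a \<Rightarrow> 'a" (infixr \<open>*\<^sub>C\<close> 75)
  assumes scaleC_add_right: "a *\<^sub>C (x + y) = a *\<^sub>C x + a *\<^sub>C y"
    and scaleC_add_left: "(a + b) *\<^sub>C x = a *\<^sub>C x + b *\<^sub>C x"
    and scaleC_scaleC: "a *\<^sub>C (b *\<^sub>C x) = (a * b) *\<^sub>C x"
    and scaleC_one: "1 *\<^sub>C x = x"
    and scaleR_scaleC: "scaleR r x = complex_of_real r *\<^sub>C x"

class complex_inner = complex_vector + real_normed_vector +
  fixes cinner :: "'a \<Rightarrow> 'a \<Rightarrow> complex"
  assumes cinner_commute: "cinner x y = cnj (cinner y x)"
    and cinner_add_right: "cinner x (y + z) = cinner x y + cinner x z"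
    and cinner_scaleC_right: "cinner x (a *\<^sub>C y) = a * cinner x y"
    and cinner_ge_zero: "0 \<le> Re (cinner x x)"
    and cinner_eq_zero_iff: "cinner x x = 0 \<longleftrightarrow> x = 0"
    and norm_eq_sqrt_cinner: "norm x = sqrt (Re (cinner x x))"

class chilbert_space = complex_inner + complete_space

definition bounded_op :: "('a::complex_inner \<Rightarrow> 'a) \<Rightarrow> bool" where
  "bounded_op T \<longleftrightarrow> (\<forall>x y. T (x + y) = T x + T y) \<and> (\<forall>c x. T (c *\<^sub>C x) = c *\<^sub>C T x)
     \<and> (\<exists>K. \<forall>x. norm (T x) \<le> norm x * K)"

definition left_invertible_op :: "('a::complex_inner \<Rightarrow> 'a) \<Rightarrow> bool" where
  "left_invertible_op T \<longleftrightarrow> (\<exists>S. bounded_op S \<and> S \<circ> T = id)"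

definition right_invertible_op :: "('a::complex_inner \<Rightarrow> 'a) \<Rightarrow> bool" where
  "right_invertible_op T \<longleftrightarrow> (\<exists>S. bounded_op S \<and> T \<circ> S = id)"

definition invertible_op :: "('a::complex_inner \<Rightarrow> 'a) \<Rightarrow> bool" where
  "invertible_op T \<longleftrightarrow> (\<exists>S. bounded_op S \<and> S \<circ> T = id \<and> T \<circ> S = id)"

definition shift_op :: "('a::complex_inner \<Rightarrow> 'a) \<Rightarrow> complex \<Rightarrow> 'a \<Rightarrow> 'a" where
  "shift_op T c = (\<lambda>x. T x - c *\<^sub>C x)"

definition op_spectrum :: "('a::complex_inner \<Rightarrow> 'a) \<Rightarrow> complex set" where
  "op_spectrum T = {c. \<not> invertible_op (shift_op T c)}"

definition left_spectrum :: "('a::complex_inner \<Rightarrow> 'a) \<Rightarrow> complex set" where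
  "left_spectrum T = {c. \<not> left_invertible_op (shift_op T c)}"

definition right_spectrum :: "('a::complex_inner \<Rightarrow> 'a) \<Rightarrow> complex set" where
  "right_spectrum T = {c. \<not> right_invertible_op (shift_op T c)}"

definition spectral_radius_op :: "('a::complex_inner \<Rightarrow> 'a) \<Rightarrow> real" where
  "spectral_radius_op T = Sup (norm ` op_spectrum T)"

end

theory Submission
  imports Defs "HOL-Complex_Analysis.Complex_Analysis"
begin

text \<open>Since \<open>L T = I\<close>, for \<open>l \<noteq> 0\<close> we have \<open>T - l = -l (L - 1/l) T\<close>. When \<open>r(L) |l| < 1\<close>
  the point \<open>1/l\<close> lies outside the spectrum of \<open>L\<close>, so the first factor is invertible and
  \<open>T - l\<close> is left invertible, right invertible or invertible exactly when \<open>T\<close> is. Thus on the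
  disc \<open>|l| < 1/r(L)\<close> all three spectra of \<open>T\<close> look as they do at \<open>0\<close>. If \<open>r(L)\<close> were \<open>0\<close>,
  the disc would be the whole plane and the spectrum of \<open>T\<close> would be empty or all of \<open>\<complex>\<close>;
  but it is bounded, and nonempty because the resolvent is weakly holomorphic and vanishes at
  infinity (Liouville).\<close>

section \<open>Complex inner product spaces\<close>

lemma scaleC_zero_left [simp]: "(0::complex) *\<^sub>C (x::'a::complex_vector) = 0"
  by (metis add_cancel_right_right scaleC_add_left)

lemma scaleC_zero_right [simp]: "a *\<^sub>C (0::'a::complex_vector) = 0"
  by (metis add_cancel_right_right add_0 scaleC_add_right)

lemma scaleC_minus_left: "(- a) *\<^sub>C (x::'a::complex_vector) = - (a *\<^sub>C x)"
  by (metis add.right_inverse add_eq_0_iff scaleC_add_left scaleC_zero_left)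

lemma scaleC_minus_right: "a *\<^sub>C (- x::'a::complex_vector) = - (a *\<^sub>C x)"
  by (metis add.right_inverse add_eq_0_iff scaleC_add_right scaleC_zero_right)

lemma scaleC_diff_left: "(a - b) *\<^sub>C (x::'a::complex_vector) = a *\<^sub>C x - b *\<^sub>C x"
  by (simp only: diff_conv_add_uminus scaleC_add_left scaleC_minus_left)

lemma scaleC_diff_right: "a *\<^sub>C (x - y::'a::complex_vector) = a *\<^sub>C x - a *\<^sub>C y"
  by (simp only: diff_conv_add_uminus scaleC_add_right scaleC_minus_right)

lemma cinner_zero_right [simp]: "cinner (x::'a::complex_inner) 0 = 0"
  using cinner_add_right[of x 0 0] by simp

lemma cinner_zero_left [simp]: "cinner 0 (x::'a::complex_inner) = 0"
  by (simp add: cinner_commute[of 0 x])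

lemma cinner_add_left: "cinner (x + y) (z::'a::complex_inner) = cinner x z + cinner y z"
  by (simp only: cinner_commute[of _ z] cinner_add_right complex_cnj_add)

lemma cinner_scaleC_left: "cinner (a *\<^sub>C x) (y::'a::complex_inner) = cnj a * cinner x y"
  by (simp only: cinner_commute[of _ y] cinner_scaleC_right complex_cnj_mult)

lemma cinner_diff_right: "cinner x (y - z::'a::complex_inner) = cinner x y - cinner x z"
  using cinner_add_right[of x "y - z" z] by (simp add: eq_diff_eq)

lemma cinner_diff_left: "cinner (x - y) (z::'a::complex_inner) = cinner x z - cinner y z"
  using cinner_add_left[of "x - y" y z] by (simp add: eq_diff_eq)

lemma cinner_self_real: "cinner x x = complex_of_real (Re (cinner x (x::'a::complex_inner)))"
proof -
  have "Im (cinner x x) = 0"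
    using arg_cong[OF cinner_commute[of x x], of Im] by simp
  then show ?thesis by (simp add: complex_eq_iff)
qed

lemma power2_norm_eq_cinner: "(norm (x::'a::complex_inner))\<^sup>2 = Re (cinner x x)"
  by (simp add: norm_eq_sqrt_cinner cinner_ge_zero)

lemma norm_scaleC: "norm (a *\<^sub>C (x::'a::complex_inner)) = cmod a * norm x"
proof (rule power2_eq_imp_eq)
  have a: "cnj a * a = complex_of_real ((cmod a)\<^sup>2)"
    using complex_norm_square[of a] by (simp add: mult.commute)
  have "cinner (a *\<^sub>C x) (a *\<^sub>C x) = (cnj a * a) * cinner x x"
    by (simp add: cinner_scaleC_left cinner_scaleC_right mult.assoc)
  also have "\<dots> = complex_of_real ((cmod a)\<^sup>2) * complex_of_real (Re (cinner x x))"
    by (subst cinner_self_real) (simp add: a)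
  finally show "(norm (a *\<^sub>C x))\<^sup>2 = (cmod a * norm x)\<^sup>2"
    by (simp add: power2_norm_eq_cinner power_mult_distrib)
qed simp_all

lemma norm_cinner_le: "cmod (cinner x y) \<le> norm x * norm (y::'a::complex_inner)"
proof (cases "x = 0")
  case False
  define a where "a = Re (cinner x x)"
  define b where "b = cinner x y"
  have a: "a > 0"
    using False cinner_ge_zero[of x] cinner_eq_zero_iff[of x] cinner_self_real[of x]
    unfolding a_def by (metis less_eq_real_def of_real_0)
  \<comment> \<open>the squared norm of the component of \<open>y\<close> orthogonal to \<open>x\<close> is nonnegative\<close>
  define t where "t = b / complex_of_real a"
  have "cinner (y - t *\<^sub>C x) (y - t *\<^sub>C x)
      = cinner y y - t * cinner y x - cnj t * cinner x y + cnj t * t * cinner x x"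
    by (simp add: cinner_diff_left cinner_diff_right cinner_scaleC_left cinner_scaleC_right
        algebra_simps)
  also have "\<dots> = cinner y y - complex_of_real ((cmod b)\<^sup>2 / a)"
    using a cinner_commute[of y x] cinner_self_real[of x]
    unfolding t_def a_def[symmetric] b_def[symmetric]
    by (simp add: field_simps complex_norm_square[symmetric] mult.commute)
  finally have "0 \<le> Re (cinner y y) - (cmod b)\<^sup>2 / a"
    using cinner_ge_zero[of "y - t *\<^sub>C x"] by simp
  then have "(cmod b)\<^sup>2 \<le> (norm x * norm y)\<^sup>2"
    using a by (simp add: field_simps a_def power2_norm_eq_cinner power_mult_distrib)
  then show ?thesis
    unfolding b_def by (meson mult_nonneg_nonneg norm_ge_zero power2_le_imp_le)
qed simp

lemma tendsto_cinner_right: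
  fixes f :: "'b \<Rightarrow> 'a::complex_inner"
  assumes "(f \<longlongrightarrow> a) F"
  shows "((\<lambda>x. cinner y (f x)) \<longlongrightarrow> cinner y a) F"
proof -
  have "((\<lambda>x. f x - a) \<longlongrightarrow> 0) F"
    using assms by (rule Lim_null[THEN iffD1])
  then have lim: "((\<lambda>x. norm y * norm (f x - a)) \<longlongrightarrow> 0) F"
    using tendsto_mult[OF tendsto_const[of "norm y"] tendsto_norm_zero] by simp
  have "eventually (\<lambda>x. norm (cinner y (f x) - cinner y a) \<le> norm y * norm (f x - a)) F"
    unfolding cinner_diff_right[symmetric] by (simp add: norm_cinner_le)
  then have "((\<lambda>x. cinner y (f x) - cinner y a) \<longlongrightarrow> 0) F"
    using lim by (rule Lim_null_comparison)
  then show ?thesis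
    by (rule Lim_null[THEN iffD2])
qed

section \<open>Bounded operators and invertibility\<close>

context
  fixes T :: "'a::complex_inner \<Rightarrow> 'a"
  assumes T: "bounded_op T"
begin

lemma bounded_op_add: "T (x + y) = T x + T y"
  using T unfolding bounded_op_def by blast

lemma bounded_op_scaleC: "T (c *\<^sub>C x) = c *\<^sub>C T x"
  using T unfolding bounded_op_def by blast

lemma bounded_op_zero: "T 0 = 0"
  using bounded_op_scaleC[of 0 0] by simp

lemma bounded_op_diff: "T (x - y) = T x - T y"
  using bounded_op_add[of "x - y" y] by (simp add: eq_diff_eq)

lemma bounded_op_normE:
  obtains K where "K > 0" "\<And>x. norm (T x) \<le> K * norm x"
proof -
  obtain K where K: "\<And>x. norm (T x) \<le> norm x * K"
    using T unfolding bounded_op_def by blast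
  have "norm (T x) \<le> max K 1 * norm x" for x
    using K[of x] mult_left_mono[of K "max K 1" "norm x"] by (simp add: mult.commute)
  then show ?thesis using that[of "max K 1"] by simp
qed

end

lemma bounded_op_comp:
  assumes A: "bounded_op A" and B: "bounded_op B"
  shows "bounded_op (A \<circ> B)"
proof -
  obtain KA where KA: "\<And>x. norm (A x) \<le> KA * norm x" "KA > 0"
    using bounded_op_normE[OF A] by blast
  obtain KB where KB: "\<And>x. norm (B x) \<le> KB * norm x"
    using bounded_op_normE[OF B] by blast
  have "norm (A (B x)) \<le> norm x * (KA * KB)" for x
    using order_trans[OF KA(1)[of "B x"] mult_left_mono[OF KB[of x]]] KA(2)
    by (simp add: algebra_simps)
  then show ?thesis unfolding bounded_op_def
    using bounded_op_add[OF A] bounded_op_add[OF B] bounded_op_scaleC[OF A] bounded_op_scaleC[OF B]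
    by auto
qed

lemma bounded_op_id: "bounded_op (id :: 'a::complex_inner \<Rightarrow> 'a)"
  unfolding bounded_op_def by (auto intro: exI[of _ 1])

lemma bounded_op_scaleC_id: "bounded_op (\<lambda>x::'a::complex_inner. c *\<^sub>C x)"
  unfolding bounded_op_def
  by (auto simp: scaleC_add_right scaleC_scaleC mult.commute norm_scaleC intro!: exI[of _ "cmod c"])

lemma bounded_op_scaleC_op:
  "bounded_op A \<Longrightarrow> bounded_op (\<lambda>x::'a::complex_inner. c *\<^sub>C A x)"
  using bounded_op_comp[OF bounded_op_scaleC_id] by (simp add: comp_def)

lemma bounded_op_diff_op:
  assumes A: "bounded_op A" and B: "bounded_op B"
  shows "bounded_op (\<lambda>x::'a::complex_inner. A x - B x)"
proof -
  obtain KA where KA: "\<And>x. norm (A x) \<le> KA * norm x"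
    using bounded_op_normE[OF A] by blast
  obtain KB where KB: "\<And>x. norm (B x) \<le> KB * norm x"
    using bounded_op_normE[OF B] by blast
  have "norm (A x - B x) \<le> norm x * (KA + KB)" for x
    using norm_triangle_ineq4[of "A x" "B x"] KA[of x] KB[of x] by (simp add: algebra_simps)
  moreover have "A (x + y) - B (x + y) = (A x - B x) + (A y - B y)" for x y
    by (simp add: bounded_op_add[OF A] bounded_op_add[OF B])
  moreover have "A (c *\<^sub>C x) - B (c *\<^sub>C x) = c *\<^sub>C (A x - B x)" for c x
    by (simp add: bounded_op_scaleC[OF A] bounded_op_scaleC[OF B] scaleC_diff_right)
  ultimately show ?thesis
    unfolding bounded_op_def by blast
qed

lemma bounded_op_shift_op: "bounded_op T \<Longrightarrow> bounded_op (shift_op T c)"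
  unfolding shift_op_def by (intro bounded_op_diff_op bounded_op_scaleC_id)

lemma shift_op_0 [simp]: "shift_op T 0 = T"
  unfolding shift_op_def by simp

lemma invertible_opI:
  assumes "bounded_op S" "\<And>x. S (A x) = x" "\<And>x. A (S x) = x"
  shows "invertible_op (A::'a::complex_inner \<Rightarrow> 'a)"
  using assms unfolding invertible_op_def by (intro exI[of _ S]) auto

lemma invertible_op_inv:
  assumes "invertible_op (A::'a::complex_inner \<Rightarrow> 'a)"
  shows "bounded_op (inv A)" "inv A (A x) = x" "A (inv A x) = x"
proof -
  obtain S where S: "bounded_op S" "S \<circ> A = id" "A \<circ> S = id"
    using assms unfolding invertible_op_def by blast
  moreover from S have "S (A x) = x" "A (S x) = x"
    by (metis comp_apply id_apply)+
  ultimately show "bounded_op (inv A)" "inv A (A x) = x" "A (inv A x) = x"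
    by (simp_all add: inv_unique_comp)
qed

lemma invertible_op_scaleC:
  assumes "invertible_op (A::'a::complex_inner \<Rightarrow> 'a)" "c \<noteq> 0"
  shows "invertible_op (\<lambda>x. c *\<^sub>C A x)"
proof (rule invertible_opI)
  show "bounded_op (\<lambda>x. inv A ((1 / c) *\<^sub>C x))"
    using bounded_op_comp[OF invertible_op_inv(1)[OF assms(1)] bounded_op_scaleC_id]
    by (simp add: comp_def)
qed (simp_all add: invertible_op_inv[OF assms(1)] scaleC_scaleC assms(2) scaleC_one)

lemma invertible_op_iff_left_right:
  "invertible_op A \<longleftrightarrow> left_invertible_op A \<and> right_invertible_op (A::'a::complex_inner \<Rightarrow> 'a)"
proof
  assume "left_invertible_op A \<and> right_invertible_op A"
  then obtain S R where S: "bounded_op S" "S \<circ> A = id" and R: "A \<circ> R = id"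
    unfolding left_invertible_op_def right_invertible_op_def by blast
  have "S = S \<circ> (A \<circ> R)" using R by simp
  also have "\<dots> = R" using S(2) by (simp add: comp_assoc[symmetric])
  finally have "S = R" .
  with S R show "invertible_op A"
    unfolding invertible_op_def by blast
qed (auto simp: invertible_op_def left_invertible_op_def right_invertible_op_def)

context
  fixes P T :: "'a::complex_inner \<Rightarrow> 'a"
  assumes P: "bounded_op P" "invertible_op P"
begin

lemma left_invertible_op_comp_iff: "left_invertible_op (P \<circ> T) \<longleftrightarrow> left_invertible_op T"
proof
  assume "left_invertible_op (P \<circ> T)"
  then obtain S where "bounded_op S" "S \<circ> (P \<circ> T) = id"
    unfolding left_invertible_op_def by blast
  then show "left_invertible_op T"
    unfolding left_invertible_op_def
    by (intro exI[of _ "S \<circ> P"]) (simp add: bounded_op_comp P(1) comp_assoc)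
next
  assume "left_invertible_op T"
  then obtain S where S: "bounded_op S" "S \<circ> T = id"
    unfolding left_invertible_op_def by blast
  have "(S \<circ> inv P) \<circ> (P \<circ> T) = id"
    using S(2) by (simp add: fun_eq_iff invertible_op_inv(2)[OF P(2)])
  then show "left_invertible_op (P \<circ> T)"
    unfolding left_invertible_op_def
    using bounded_op_comp[OF S(1) invertible_op_inv(1)[OF P(2)]] by blast
qed

lemma right_invertible_op_comp_iff: "right_invertible_op (P \<circ> T) \<longleftrightarrow> right_invertible_op T"
proof
  assume "right_invertible_op (P \<circ> T)"
  then obtain S where S: "bounded_op S" "P \<circ> T \<circ> S = id"
    unfolding right_invertible_op_def by blast
  have "T (S (P x)) = x" for x
    using fun_cong[OF S(2), of "P x"] invertible_op_inv(2)[OF P(2)] by (metis comp_apply id_apply)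
  then have "T \<circ> (S \<circ> P) = id" by (simp add: fun_eq_iff)
  then show "right_invertible_op T"
    unfolding right_invertible_op_def
    using bounded_op_comp[OF S(1) P(1)] by blast
next
  assume "right_invertible_op T"
  then obtain S where S: "bounded_op S" "T \<circ> S = id"
    unfolding right_invertible_op_def by blast
  have "(P \<circ> T) \<circ> (S \<circ> inv P) = id"
    using S(2) by (simp add: fun_eq_iff invertible_op_inv(3)[OF P(2)])
  then show "right_invertible_op (P \<circ> T)"
    unfolding right_invertible_op_def
    using bounded_op_comp[OF S(1) invertible_op_inv(1)[OF P(2)]] by blast
qed

lemma invertible_op_comp_iff: "invertible_op (P \<circ> T) \<longleftrightarrow> invertible_op T"
  by (simp add: invertible_op_iff_left_right left_invertible_op_comp_iff right_invertible_op_comp_iff)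

end

lemma invertible_opI_bounded_below:
  fixes S :: "'a::complex_inner \<Rightarrow> 'a"
  assumes S: "bounded_op S" "surj S" and m: "m > 0" "\<And>z. m * norm z \<le> norm (S z)"
  shows "invertible_op S"
proof -
  have "inj S"
  proof (rule injI)
    fix x y assume "S x = S y"
    then have "m * norm (x - y) \<le> 0"
      using m(2)[of "x - y"] by (simp add: bounded_op_diff[OF S(1)])
    then show "x = y" using m(1) by (simp add: mult_le_0_iff)
  qed
  then have inv: "inv S (S x) = x" "S (inv S x) = x" for x
    using S(2) by (simp_all add: surj_f_inv_f)
  have "inv S (x + y) = inv S x + inv S y" "inv S (c *\<^sub>C x) = c *\<^sub>C inv S x" for x y c
    by (metis inv bounded_op_add[OF S(1)], metis inv bounded_op_scaleC[OF S(1)])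
  moreover have "norm (inv S w) \<le> norm w * (1 / m)" for w
    using m(2)[of "inv S w"] m(1) by (simp add: inv field_simps mult.commute)
  ultimately have "bounded_op (inv S)"
    unfolding bounded_op_def by blast
  then show ?thesis using inv by (rule invertible_opI)
qed

section \<open>Boundedness of the spectrum\<close>

lemma norm_shift_op_ge:
  fixes A :: "'a::complex_inner \<Rightarrow> 'a"
  assumes "\<And>x. norm (A x) \<le> K * norm x"
  shows "(cmod c - K) * norm z \<le> norm (shift_op A c z)"
proof -
  have "(cmod c - K) * norm z \<le> norm (c *\<^sub>C z) - norm (A z)"
    using assms[of z] by (simp add: norm_scaleC left_diff_distrib)
  also have "\<dots> \<le> norm (A z - c *\<^sub>C z)"
    by (metis norm_minus_commute norm_triangle_ineq2)
  finally show ?thesis by (simp add: shift_op_def)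
qed

lemma invertible_shift_op_large:
  fixes A :: "'a::chilbert_space \<Rightarrow> 'a"
  assumes A: "bounded_op A" and K: "K \<ge> 0" "\<And>x. norm (A x) \<le> K * norm x" and c: "K < cmod c"
  shows "invertible_op (shift_op A c)"
proof (rule invertible_opI_bounded_below[OF bounded_op_shift_op[OF A]])
  show "surj (shift_op A c)"
  proof (rule surjI)
    fix w
    \<comment> \<open>\<open>A z - c z = w\<close> means \<open>z\<close> is a fixed point of the contraction \<open>f\<close>\<close>
    define f where "f z = (1 / c) *\<^sub>C (A z - w)" for z
    have "dist (f x) (f y) \<le> (K / cmod c) * dist x y" for x y
    proof -
      have "dist (f x) (f y) = norm (A (x - y)) / cmod c"
        by (simp add: f_def dist_norm bounded_op_diff[OF A] scaleC_diff_right[symmetric]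
            norm_scaleC norm_divide)
      also have "\<dots> \<le> (K / cmod c) * dist x y"
        using K(2)[of "x - y"] c K(1) by (simp add: dist_norm divide_right_mono)
      finally show ?thesis .
    qed
    moreover have "0 \<le> K / cmod c" "K / cmod c < 1"
      using c K(1) by (simp_all add: divide_less_eq)
    ultimately obtain z where z: "f z = z"
      using banach_fix_type[of "K / cmod c" f] by blast
    have "c \<noteq> 0" using c K(1) by auto
    then have "A z - w = c *\<^sub>C f z"
      by (simp add: f_def scaleC_scaleC scaleC_one)
    then have "shift_op A c z = w"
      by (simp add: z shift_op_def diff_eq_eq add.commute)
    then show "shift_op A c (SOME z. shift_op A c z = w) = w"
      by (rule someI)
  qed
qed (use c norm_shift_op_ge[OF K(2)] in auto)

lemma bounded_op_spectrum:
  fixes A :: "'a::chilbert_space \<Rightarrow> 'a"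
  assumes "bounded_op A"
  shows "bounded (op_spectrum A)"
proof -
  obtain K where "K > 0" "\<And>x. norm (A x) \<le> K * norm x"
    using bounded_op_normE[OF assms] by blast
  then have "cmod c \<le> K" if "c \<in> op_spectrum A" for c
    using invertible_shift_op_large[OF assms, of K c] that unfolding op_spectrum_def by force
  then show ?thesis by (auto simp: bounded_iff)
qed

lemma norm_le_spectral_radius_op:
  fixes A :: "'a::chilbert_space \<Rightarrow> 'a"
  assumes "bounded_op A" "c \<in> op_spectrum A"
  shows "cmod c \<le> spectral_radius_op A"
  unfolding spectral_radius_op_def
  using assms by (intro cSup_upper) (auto simp: bdd_above_norm bounded_op_spectrum)

lemma spectral_radius_op_ge_ball:
  fixes A :: "'a::chilbert_space \<Rightarrow> 'a"
  assumes "bounded_op A" "r > 0" "ball 0 r \<subseteq> op_spectrum A"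
  shows "r \<le> spectral_radius_op A"
proof (rule dense_le_bounded[OF \<open>r > 0\<close>])
  fix t :: real assume "0 < t" "t < r"
  then have "complex_of_real t \<in> op_spectrum A"
    using assms(3) by auto
  then show "t \<le> spectral_radius_op A"
    using norm_le_spectral_radius_op[OF assms(1)] \<open>0 < t\<close> by fastforce
qed

section \<open>The resolvent and nonemptiness of the spectrum\<close>

abbreviation resolvent_op :: "('a::complex_inner \<Rightarrow> 'a) \<Rightarrow> complex \<Rightarrow> 'a \<Rightarrow> 'a" where
  "resolvent_op A l \<equiv> inv (shift_op A l)"

lemma shift_op_diff: "shift_op A l v = shift_op A m v - (l - m) *\<^sub>C v"
  unfolding shift_op_def by (simp add: scaleC_diff_left)

context
  fixes A :: "'a::complex_inner \<Rightarrow> 'a"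
  assumes A: "bounded_op A"
begin

lemma resolvent_op_inverse:
  assumes "l \<notin> op_spectrum A"
  shows "bounded_op (resolvent_op A l)" "resolvent_op A l (shift_op A l x) = x"
    "shift_op A l (resolvent_op A l x) = x"
  using invertible_op_inv assms unfolding op_spectrum_def by auto

lemma resolvent_op_identity:
  assumes l: "l \<notin> op_spectrum A" and m: "m \<notin> op_spectrum A"
  shows "resolvent_op A l w - resolvent_op A m w
    = (l - m) *\<^sub>C resolvent_op A l (resolvent_op A m w)"
proof -
  have S: "bounded_op (shift_op A l)" by (rule bounded_op_shift_op[OF A])
  have "shift_op A l (resolvent_op A l w - resolvent_op A m w)
      = w - shift_op A l (resolvent_op A m w)"
    by (simp add: bounded_op_diff[OF S] resolvent_op_inverse[OF l])
  also have "\<dots> = (l - m) *\<^sub>C resolvent_op A m w"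
    by (simp add: shift_op_diff[of A l _ m] resolvent_op_inverse[OF m])
  also have "\<dots> = shift_op A l ((l - m) *\<^sub>C resolvent_op A l (resolvent_op A m w))"
    by (simp add: bounded_op_scaleC[OF S] resolvent_op_inverse[OF l])
  finally show ?thesis
    by (metis resolvent_op_inverse(2)[OF l])
qed

lemma resolvent_op_norm_le_near:
  assumes m: "m \<notin> op_spectrum A"
  obtains M where "M > 0"
    "\<And>l w. l \<notin> op_spectrum A \<Longrightarrow> cmod (l - m) \<le> 1 / (2 * M) \<Longrightarrow>
      norm (resolvent_op A l w) \<le> 2 * M * norm w"
proof -
  obtain M where M: "M > 0" "\<And>x. norm (resolvent_op A m x) \<le> M * norm x"
    using bounded_op_normE[OF resolvent_op_inverse(1)[OF m]] by blast
  have "norm (resolvent_op A l w) \<le> 2 * M * norm w"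
    if l: "l \<notin> op_spectrum A" and lm: "cmod (l - m) \<le> 1 / (2 * M)" for l w
  proof -
    define z where "z = resolvent_op A l w"
    have "shift_op A m z = w + (l - m) *\<^sub>C z"
      using shift_op_diff[of A l z m] by (simp add: z_def resolvent_op_inverse[OF l] algebra_simps)
    then have "z = resolvent_op A m (w + (l - m) *\<^sub>C z)"
      by (metis resolvent_op_inverse(2)[OF m])
    then have "norm z \<le> M * norm (w + (l - m) *\<^sub>C z)"
      using M(2) by metis
    also have "\<dots> \<le> M * (norm w + cmod (l - m) * norm z)"
      using M(1) norm_triangle_ineq[of w "(l - m) *\<^sub>C z"]
      by (intro mult_left_mono) (auto simp: norm_scaleC)
    also have "\<dots> \<le> M * (norm w + (1 / (2 * M)) * norm z)"
      using M(1) lm by (intro mult_left_mono add_left_mono mult_right_mono) auto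
    also have "\<dots> = M * norm w + norm z / 2"
      using M(1) by (simp add: field_simps)
    finally show ?thesis unfolding z_def by simp
  qed
  with M(1) show ?thesis using that by blast
qed

lemma resolvent_op_continuous:
  assumes m: "m \<notin> op_spectrum A"
  shows "((\<lambda>l. resolvent_op A l v) \<longlongrightarrow> resolvent_op A m v) (at m within - op_spectrum A)"
proof -
  obtain M where M: "M > 0" "\<And>l w. l \<notin> op_spectrum A \<Longrightarrow> cmod (l - m) \<le> 1 / (2 * M) \<Longrightarrow>
      norm (resolvent_op A l w) \<le> 2 * M * norm w"
    using resolvent_op_norm_le_near[OF m] by blast
  define C where "C = 2 * M * norm (resolvent_op A m v)"
  have "norm (resolvent_op A l v - resolvent_op A m v) \<le> C * cmod (l - m)"
    if "l \<notin> op_spectrum A" "dist l m < 1 / (2 * M)" for l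
  proof -
    have "norm (resolvent_op A l v - resolvent_op A m v)
        = cmod (l - m) * norm (resolvent_op A l (resolvent_op A m v))"
      by (simp add: resolvent_op_identity[OF that(1) m] norm_scaleC)
    also have "\<dots> \<le> cmod (l - m) * C"
      unfolding C_def using that by (intro mult_left_mono M(2)) (auto simp: dist_norm)
    finally show ?thesis by (simp add: mult.commute)
  qed
  then have "eventually (\<lambda>l. norm (resolvent_op A l v - resolvent_op A m v) \<le> C * cmod (l - m))
      (at m within - op_spectrum A)"
    unfolding eventually_at using M(1) by (intro exI[of _ "1 / (2 * M)"]) auto
  moreover have "((\<lambda>l. C * cmod (l - m)) \<longlongrightarrow> 0) (at m within - op_spectrum A)"
    using tendsto_mult[OF tendsto_const[of C] tendsto_norm_zero[OF LIM_zero[OF tendsto_ident_at]]]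
    by simp
  ultimately show ?thesis
    by (rule Lim_null_comparison[THEN Lim_null[THEN iffD2]])
qed

lemma resolvent_op_weakly_holomorphic:
  "(\<lambda>l. cinner y (resolvent_op A l v)) holomorphic_on - op_spectrum A"
  unfolding holomorphic_on_def field_differentiable_def
proof (intro ballI exI)
  fix m assume m: "m \<in> - op_spectrum A"
  have "((\<lambda>l. cinner y (resolvent_op A l (resolvent_op A m v)))
      \<longlongrightarrow> cinner y (resolvent_op A m (resolvent_op A m v))) (at m within - op_spectrum A)"
    using m by (intro tendsto_cinner_right resolvent_op_continuous) auto
  moreover have "eventually (\<lambda>l. cinner y (resolvent_op A l (resolvent_op A m v))
      = (cinner y (resolvent_op A l v) - cinner y (resolvent_op A m v)) / (l - m))
      (at m within - op_spectrum A)"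
    using m unfolding eventually_at_filter
    by (intro always_eventually)
      (auto simp: cinner_diff_right[symmetric] resolvent_op_identity cinner_scaleC_right)
  ultimately show "((\<lambda>l. cinner y (resolvent_op A l v)) has_field_derivative
      cinner y (resolvent_op A m (resolvent_op A m v))) (at m within - op_spectrum A)"
    unfolding has_field_derivative_iff by (rule Lim_transform_eventually)
qed

end

context
  fixes A :: "'a::chilbert_space \<Rightarrow> 'a"
  assumes A: "bounded_op A"
begin

lemma resolvent_op_norm_le_far:
  assumes K: "K \<ge> 0" "\<And>x. norm (A x) \<le> K * norm x" and l: "K < cmod l"
  shows "norm (resolvent_op A l w) \<le> norm w / (cmod l - K)"
proof -
  have "l \<notin> op_spectrum A"
    using invertible_shift_op_large[OF A K l] unfolding op_spectrum_def by blast
  then have "(cmod l - K) * norm (resolvent_op A l w) \<le> norm w"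
    using norm_shift_op_ge[OF K(2), of l "resolvent_op A l w"] by (simp add: resolvent_op_inverse[OF A])
  then show ?thesis
    using l by (simp add: field_simps)
qed

lemma resolvent_op_weakly_tendsto_0:
  "((\<lambda>l. cinner y (resolvent_op A l v)) \<longlongrightarrow> 0) at_infinity"
proof -
  obtain K where K: "K > 0" "\<And>x. norm (A x) \<le> K * norm x"
    using bounded_op_normE[OF A] by blast
  define C where "C = 2 * norm y * norm v"
  have "norm (cinner y (resolvent_op A l v)) \<le> C * norm (inverse l)" if l: "2 * K \<le> norm l" for l
  proof -
    have "norm (cinner y (resolvent_op A l v)) \<le> norm y * norm (resolvent_op A l v)"
      by (rule norm_cinner_le)
    also have "\<dots> \<le> norm y * (norm v / (cmod l - K))"
      using K l by (intro mult_left_mono resolvent_op_norm_le_far) auto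
    also have "\<dots> \<le> norm y * (norm v / (cmod l / 2))"
      using K l by (intro mult_left_mono divide_left_mono) (auto intro!: mult_pos_pos)
    also have "\<dots> = C * norm (inverse l)"
      by (simp add: C_def norm_inverse norm_divide field_simps)
    finally show ?thesis .
  qed
  then have "eventually (\<lambda>l. norm (cinner y (resolvent_op A l v)) \<le> C * norm (inverse l))
      at_infinity"
    unfolding eventually_at_infinity by blast
  moreover have "((\<lambda>l::complex. C * norm (inverse l)) \<longlongrightarrow> 0) at_infinity"
    using tendsto_mult[OF tendsto_const[of C] tendsto_norm_zero[OF tendsto_inverse_0]] by simp
  ultimately show ?thesis
    by (rule Lim_null_comparison)
qed

lemma op_spectrum_nonempty:
  assumes "\<exists>x::'a. x \<noteq> 0"
  shows "op_spectrum A \<noteq> {}"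
proof
  assume empty: "op_spectrum A = {}"
  obtain x :: 'a where x: "x \<noteq> 0" using assms by blast
  define y where "y = resolvent_op A 0 x"
  have "(\<lambda>l. cinner y (resolvent_op A l x)) holomorphic_on UNIV"
    using resolvent_op_weakly_holomorphic[OF A] empty by simp
  then have "cinner y (resolvent_op A 0 x) = 0"
    by (rule Liouville_weak_0[OF _ resolvent_op_weakly_tendsto_0])
  then have "y = 0" by (simp add: y_def cinner_eq_zero_iff)
  then show False
    using resolvent_op_inverse(3)[OF A, of 0 x] empty x by (simp add: y_def bounded_op_zero[OF A])
qed

end

section \<open>Operators with a left inverse\<close>

lemma right_spectrum_subset_op_spectrum: "right_spectrum T \<subseteq> op_spectrum T"
  unfolding right_spectrum_def op_spectrum_def by (auto simp: invertible_op_iff_left_right)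

lemma shift_op_eq_comp_left_inverse:
  fixes T L :: "'a::complex_inner \<Rightarrow> 'a"
  assumes LT: "L \<circ> T = id" and l: "l \<noteq> 0"
  shows "shift_op T l = (\<lambda>x. (- l) *\<^sub>C shift_op L (1 / l) x) \<circ> T"
proof
  fix x
  have "L (T x) = x" using LT by (metis comp_apply id_apply)
  then have "(- l) *\<^sub>C shift_op L (1 / l) (T x) = (- l) *\<^sub>C (x - (1 / l) *\<^sub>C T x)"
    by (simp add: shift_op_def)
  also have "\<dots> = T x - l *\<^sub>C x"
    using l by (simp add: scaleC_diff_right scaleC_scaleC scaleC_minus_left scaleC_one)
  finally show "shift_op T l x = ((\<lambda>x. (- l) *\<^sub>C shift_op L (1 / l) x) \<circ> T) x"
    by (simp add: shift_op_def)
qed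

lemma shift_op_factor_left_inverse:
  fixes T L :: "'a::chilbert_space \<Rightarrow> 'a"
  assumes L: "bounded_op L" and LT: "L \<circ> T = id" and l: "spectral_radius_op L * cmod l < 1"
  obtains P where "bounded_op P" "invertible_op P" "shift_op T l = P \<circ> T"
proof (cases "l = 0")
  case True
  then show ?thesis
    using that[of id] bounded_op_id invertible_opI[OF bounded_op_id, of id] by simp
next
  case False
  have "1 / l \<notin> op_spectrum L"
  proof
    assume "1 / l \<in> op_spectrum L"
    then have "cmod (1 / l) \<le> spectral_radius_op L"
      by (rule norm_le_spectral_radius_op[OF L])
    then show False
      using l False by (simp add: norm_divide field_simps)
  qed
  then have "invertible_op (\<lambda>x. (- l) *\<^sub>C shift_op L (1 / l) x)"
    using False by (intro invertible_op_scaleC) (auto simp: op_spectrum_def)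
  then show ?thesis
    using that bounded_op_scaleC_op[OF bounded_op_shift_op[OF L]]
      shift_op_eq_comp_left_inverse[OF LT False] by blast
qed

lemma mem_spectra_iff_0_left_inverse:
  fixes T L :: "'a::chilbert_space \<Rightarrow> 'a"
  assumes "bounded_op L" "L \<circ> T = id" "spectral_radius_op L * cmod l < 1"
  shows "l \<in> left_spectrum T \<longleftrightarrow> 0 \<in> left_spectrum T"
    and "l \<in> right_spectrum T \<longleftrightarrow> 0 \<in> right_spectrum T"
    and "l \<in> op_spectrum T \<longleftrightarrow> 0 \<in> op_spectrum T"
proof -
  obtain P where "bounded_op P" "invertible_op P" "shift_op T l = P \<circ> T"
    using shift_op_factor_left_inverse[OF assms] by blast
  then show "l \<in> left_spectrum T \<longleftrightarrow> 0 \<in> left_spectrum T"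
    and "l \<in> right_spectrum T \<longleftrightarrow> 0 \<in> right_spectrum T"
    and "l \<in> op_spectrum T \<longleftrightarrow> 0 \<in> op_spectrum T"
    by (simp_all add: left_spectrum_def right_spectrum_def op_spectrum_def
        left_invertible_op_comp_iff right_invertible_op_comp_iff invertible_op_comp_iff)
qed

lemma spectral_radius_op_left_inverse_pos:
  fixes T L :: "'a::chilbert_space \<Rightarrow> 'a"
  assumes "\<exists>x::'a. x \<noteq> 0" and T: "bounded_op T" and L: "bounded_op L" and LT: "L \<circ> T = id"
  shows "spectral_radius_op L > 0"
proof (rule ccontr)
  assume "\<not> spectral_radius_op L > 0"
  then have "spectral_radius_op L * cmod l < 1" for l
    by (metis mult_nonpos_nonneg norm_ge_zero not_less order_le_less_trans zero_less_one)
  then have "op_spectrum T = UNIV"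
    using mem_spectra_iff_0_left_inverse(3)[OF L LT] op_spectrum_nonempty[OF T assms(1)] by blast
  then show False
    using bounded_op_spectrum[OF T] not_bounded_UNIV by simp
qed

theorem corollary4p2:
  fixes T L :: "'a::chilbert_space \<Rightarrow> 'a"
  assumes nontriv: "\<exists>x::'a. x \<noteq> 0"
    and T_bdd: "bounded_op T" and L_bdd: "bounded_op L"
    and T_left_inv: "left_invertible_op T"
    and LT: "L \<circ> T = id"
  shows "spectral_radius_op L > 0
    \<and> (0 \<in> op_spectrum T \<longrightarrow>
         ball 0 (1 / spectral_radius_op L) \<subseteq> right_spectrum T - left_spectrum T)
    \<and> (0 \<notin> op_spectrum T \<longrightarrow>
         op_spectrum T \<subseteq> UNIV - ball 0 (1 / spectral_radius_op L))
    \<and> spectral_radius_op T * spectral_radius_op L \<ge> 1"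
proof -
  define r where "r = spectral_radius_op L"
  have r: "r > 0"
    unfolding r_def using spectral_radius_op_left_inverse_pos[OF nontriv T_bdd L_bdd LT] .
  have disc: "spectral_radius_op L * cmod l < 1" if "l \<in> ball 0 (1 / r)" for l
    using that r by (simp add: r_def field_simps)
  note spectra = mem_spectra_iff_0_left_inverse[OF L_bdd LT disc]
  have "0 \<notin> left_spectrum T"
    using T_left_inv by (simp add: left_spectrum_def)
  moreover have "0 \<in> right_spectrum T" if "0 \<in> op_spectrum T"
    using that T_left_inv by (simp add: right_spectrum_def op_spectrum_def invertible_op_iff_left_right)
  ultimately have singular: "ball 0 (1 / r) \<subseteq> right_spectrum T - left_spectrum T"
    if "0 \<in> op_spectrum T"
    using that spectra(1,2) by blast
  have regular: "op_spectrum T \<subseteq> UNIV - ball 0 (1 / r)" if "0 \<notin> op_spectrum T"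
    using that spectra(3) by blast
  have "1 / r \<le> spectral_radius_op T"
  proof (cases "0 \<in> op_spectrum T")
    case True
    then show ?thesis
      using singular right_spectrum_subset_op_spectrum r
      by (intro spectral_radius_op_ge_ball[OF T_bdd]) auto
  next
    case False
    then obtain c where "c \<in> op_spectrum T" "1 / r \<le> cmod c"
      using regular op_spectrum_nonempty[OF T_bdd nontriv] by fastforce
    then show ?thesis
      using norm_le_spectral_radius_op[OF T_bdd] by fastforce
  qed
  then show ?thesis
    using r singular regular by (simp add: r_def field_simps)
qed

end
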